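(* Let $\mathcal G$ be a finite connected groupoid and $\alpha=(S_g,\alpha_g)_{g\in\mathcal G}$ a unital group-type partial action of $\mathcal G$ on a ring $S=\bigoplus_{y\in\mathcal G_0}S_y$, with $S_g=S1_g$. Let $x\in\mathcal G_0$ and $\tau=\{\tau_y\}_{y\in\mathcal G_0}$ a transversal in $\mathcal G$ for $x$ with $S_{\tau_y^{-1}}=S_x$ and $S_{\tau_y}=S_y$ for all $y\in\mathcal G_0$. Then the map $\Phi_\tau:S_x^{\alpha_{\mathcal G(x)}}\to S^{\alpha_{\mathcal G}}$, $\Phi_\tau(a)=\sum_{y\in\mathcal G_0}\alpha_{\tau_y}(a)$, is a ring isomorphism.
   Context: A groupoid is a small category with all morphisms invertible; $\mathcal G_0$ is the set of objects (identified with identity morphisms), $s(g),t(g)$ source and target, $\mathcal G(x,y)=\{g:s(g)=x,t(g)=y\}$, $\mathcal G(x)=\mathcal G(x,x)$; $gh$ is defined iff $s(g)=t(h)$; connected means all $\mathcal G(x,y)\ne\emptyset$. A partial action $\alpha=(S_g,\alpha_g)_{g\in\mathcal G}$ on a ring $S$: for each $g$, $S_{t(g)}$ is an ideal of $S$, $S_g$ an ideal of $S_{t(g)}$, $\alpha_g:S_{g^{-1}}\to S_g$ a ring isomorphism; $\alpha_x=\mathrm{id}_{S_x}$ for $x\in\mathcal G_0$; for composable $(g,h)$, $\alpha_h^{-1}(S_{g^{-1}}\cap S_h)\subseteq S_{(gh)^{-1}}$ and $\alpha_g\alpha_h(a)=\alpha_{gh}(a)$ there. Unital: $S_g=S1_g$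 with $1_g$ a central idempotent. A transversal for $x$ is $\{\tau_y\}_{y\in\mathcal G_0}$ with $\tau_y\in\mathcal G(x,y)$, $\tau_x=x$; $\alpha$ is group-type if some $x$ and transversal satisfy $S_{\tau_y^{-1}}=S_x$, $S_{\tau_y}=S_y$ for all $y$. Invariants: $S^{\alpha_{\mathcal G}}=\{a\in S:\alpha_g(a1_{g^{-1}})=a1_g\ \forall g\in\mathcal G\}$ and $S_x^{\alpha_{\mathcal G(x)}}=\{a\in S_x:\alpha_g(a1_{g^{-1}})=a1_g\ \forall g\in\mathcal G(x)\}$ (the isotropy group $\mathcal G(x)$ acts partially on $S_x$ by $(S_g,\alpha_g)_{g\in\mathcal G(x)}$). *)

theory Defs
  imports Main
begin

text \<open>Groupoids are given by a set of morphisms G, the set of objects G0 (identified with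
identity morphisms), source s, target t, a (partial) composition m (m g h = gh, defined when
s g = t h) and inversion i.\<close>

definition groupoid ::
  "'g set \<Rightarrow> 'g set \<Rightarrow> ('g \<Rightarrow> 'g) \<Rightarrow> ('g \<Rightarrow> 'g) \<Rightarrow> ('g \<Rightarrow> 'g \<Rightarrow> 'g) \<Rightarrow> ('g \<Rightarrow> 'g) \<Rightarrow> bool" where
  "groupoid G G0 s t m i \<longleftrightarrow>
     G0 \<subseteq> G \<and>
     (\<forall>g\<in>G. s g \<in> G0 \<and> t g \<in> G0) \<and>
     (\<forall>x\<in>G0. s x = x \<and> t x = x) \<and>
     (\<forall>g\<in>G. \<forall>h\<in>G. s g = t h \<longrightarrow> m g h \<in> G \<and> s (m g h) = s h \<and> t (m g h) = t g) \<and>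
     (\<forall>f\<in>G. \<forall>g\<in>G. \<forall>h\<in>G. s f = t g \<and> s g = t h \<longrightarrow> m (m f g) h = m f (m g h)) \<and>
     (\<forall>g\<in>G. m (t g) g = g \<and> m g (s g) = g) \<and>
     (\<forall>g\<in>G. i g \<in> G \<and> s (i g) = t g \<and> t (i g) = s g \<and> m g (i g) = t g \<and> m (i g) g = s g)"

definition hom :: "'g set \<Rightarrow> ('g \<Rightarrow> 'g) \<Rightarrow> ('g \<Rightarrow> 'g) \<Rightarrow> 'g \<Rightarrow> 'g \<Rightarrow> 'g set" where
  "hom G s t x y = {g\<in>G. s g = x \<and> t g = y}"

definition connected_groupoid :: "'g set \<Rightarrow> 'g set \<Rightarrow> ('g \<Rightarrow> 'g) \<Rightarrow> ('g \<Rightarrow> 'g) \<Rightarrow> bool" where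
  "connected_groupoid G G0 s t \<longleftrightarrow> (\<forall>x\<in>G0. \<forall>y\<in>G0. hom G s t x y \<noteq> {})"

definition ideal_in :: "'a::ring set \<Rightarrow> 'a set \<Rightarrow> bool" where
  "ideal_in I R \<longleftrightarrow> I \<subseteq> R \<and> 0 \<in> I \<and> (\<forall>a\<in>I. \<forall>b\<in>I. a + b \<in> I \<and> - a \<in> I) \<and>
     (\<forall>r\<in>R. \<forall>a\<in>I. r * a \<in> I \<and> a * r \<in> I)"

abbreviation ideal :: "'a::ring set \<Rightarrow> bool" where
  "ideal I \<equiv> ideal_in I UNIV"

definition ring_iso_on :: "('a::ring \<Rightarrow> 'b::ring) \<Rightarrow> 'a set \<Rightarrow> 'b set \<Rightarrow> bool" where
  "ring_iso_on f A B \<longleftrightarrow> bij_betw f A B \<and>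
     (\<forall>a\<in>A. \<forall>b\<in>A. f (a + b) = f a + f b \<and> f (a * b) = f a * f b)"

definition partial_action ::
  "'g set \<Rightarrow> 'g set \<Rightarrow> ('g \<Rightarrow> 'g) \<Rightarrow> ('g \<Rightarrow> 'g) \<Rightarrow> ('g \<Rightarrow> 'g \<Rightarrow> 'g) \<Rightarrow> ('g \<Rightarrow> 'g)
   \<Rightarrow> ('g \<Rightarrow> 'a::ring set) \<Rightarrow> ('g \<Rightarrow> 'a \<Rightarrow> 'a) \<Rightarrow> bool" where
  "partial_action G G0 s t m i D \<alpha> \<longleftrightarrow>
     (\<forall>g\<in>G. ideal (D (t g)) \<and> ideal_in (D g) (D (t g)) \<and> ring_iso_on (\<alpha> g) (D (i g)) (D g)) \<and>
     (\<forall>x\<in>G0. \<forall>a\<in>D x. \<alpha> x a = a) \<and>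
     (\<forall>g\<in>G. \<forall>h\<in>G. s g = t h \<longrightarrow>
        (\<forall>a\<in>D (i h). \<alpha> h a \<in> D (i g) \<longrightarrow> a \<in> D (i (m g h)) \<and> \<alpha> g (\<alpha> h a) = \<alpha> (m g h) a))"

definition unital_pa :: "'g set \<Rightarrow> ('g \<Rightarrow> 'a::ring set) \<Rightarrow> ('g \<Rightarrow> 'a) \<Rightarrow> bool" where
  "unital_pa G D e \<longleftrightarrow> (\<forall>g\<in>G. D g = range (\<lambda>a. a * e g) \<and> e g * e g = e g \<and> (\<forall>a. a * e g = e g * a))"

definition internal_direct_sum :: "'i set \<Rightarrow> ('i \<Rightarrow> 'a::ring set) \<Rightarrow> bool" where
  "internal_direct_sum I Sf \<longleftrightarrow>
     (\<forall>a. \<exists>!f. (\<forall>j. j \<notin> I \<longrightarrow> f j = 0) \<and> (\<forall>j\<in>I. f j \<in> Sf j) \<and> a = (\<Sum>j\<in>I. f j))"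

definition transversal :: "'g set \<Rightarrow> 'g set \<Rightarrow> ('g \<Rightarrow> 'g) \<Rightarrow> ('g \<Rightarrow> 'g) \<Rightarrow> 'g \<Rightarrow> ('g \<Rightarrow> 'g) \<Rightarrow> bool" where
  "transversal G G0 s t x \<tau> \<longleftrightarrow> (\<forall>y\<in>G0. \<tau> y \<in> hom G s t x y) \<and> \<tau> x = x"

definition group_type ::
  "'g set \<Rightarrow> 'g set \<Rightarrow> ('g \<Rightarrow> 'g) \<Rightarrow> ('g \<Rightarrow> 'g) \<Rightarrow> ('g \<Rightarrow> 'g) \<Rightarrow> ('g \<Rightarrow> 'a set) \<Rightarrow> bool" where
  "group_type G G0 s t i D \<longleftrightarrow> (\<exists>x\<in>G0. \<exists>\<tau>. transversal G G0 s t x \<tau> \<and>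
      (\<forall>y\<in>G0. D (i (\<tau> y)) = D x \<and> D (\<tau> y) = D y))"

definition invariants :: "'g set \<Rightarrow> ('g \<Rightarrow> 'g) \<Rightarrow> ('g \<Rightarrow> 'a::ring) \<Rightarrow> ('g \<Rightarrow> 'a \<Rightarrow> 'a) \<Rightarrow> 'a set" where
  "invariants G i e \<alpha> = {a. \<forall>g\<in>G. \<alpha> g (a * e (i g)) = a * e g}"

definition isotropy_invariants ::
  "'g set \<Rightarrow> ('g \<Rightarrow> 'g) \<Rightarrow> ('g \<Rightarrow> 'g) \<Rightarrow> ('g \<Rightarrow> 'g) \<Rightarrow> ('g \<Rightarrow> 'a::ring set) \<Rightarrow> ('g \<Rightarrow> 'a)
   \<Rightarrow> ('g \<Rightarrow> 'a \<Rightarrow> 'a) \<Rightarrow> 'g \<Rightarrow> 'a set" where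
  "isotropy_invariants G s t i D e \<alpha> x =
     {a\<in>D x. \<forall>g\<in>hom G s t x x. \<alpha> g (a * e (i g)) = a * e g}"

end

theory Submission
  imports Defs
begin

(*
  Since S_(tau_y^-1) = S_x and S_(tau_y) = S_y, every alpha_(tau_y) is a ring isomorphism
  S_x -> S_y with inverse alpha_(tau_y^-1). As S is the direct sum of the S_y with orthogonal
  central idempotents 1_y, Phi_tau is a ring homomorphism whose y-component Phi_tau(a) 1_y is
  alpha_(tau_y)(a); its x-component is a itself, so Phi_tau is injective, and an invariant b is
  the image of b 1_x.

  The real work is invariance of Phi_tau(a). A morphism g : u -> v acts on S_(g^-1) as
  alpha_(tau_v) o alpha_h o alpha_(tau_u^-1) with h = tau_v^-1 g tau_u in G(x), so G(x)-invariance
  of a yields alpha_g(alpha_(tau_u)(a) 1_(g^-1)) = alpha_(tau_v)(a) w for some w independent of a.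
  Taking a = 1_x identifies w with 1_g.
*)

lemma unital_paD:
  assumes "unital_pa I A E" "j \<in> I"
  shows "A j = range (\<lambda>a. a * E j)" and "E j * E j = E j" and "a * E j = E j * a"
  using assms unfolding unital_pa_def by blast+

lemma unital_pa_mem_iff:
  assumes "unital_pa I A E" "j \<in> I"
  shows "a \<in> A j \<longleftrightarrow> a * E j = a"
proof
  assume "a \<in> A j"
  then obtain b where "a = b * E j" using unital_paD(1)[OF assms] by blast
  then show "a * E j = a" using unital_paD(2)[OF assms] by (simp add: mult.assoc)
next
  assume "a * E j = a"
  then show "a \<in> A j" using unital_paD(1)[OF assms] by (metis rangeI)
qed

lemma internal_direct_sum_orthogonal:
  assumes ds: "internal_direct_sum I A" and "finite I" and un: "unital_pa I A E"
    and "y \<in> I" "z \<in> I" "y \<noteq> z" "a \<in> A y"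
  shows "a * E z = 0"
proof -
  have zero: "0 \<in> A j" if "j \<in> I" for j using unital_pa_mem_iff[OF un that] by simp
  define b where "b = a * E z"
  have "b * E y = (a * E y) * E z"
    unfolding b_def using unital_paD(3)[OF un \<open>z \<in> I\<close>, of "E y"] by (simp add: mult.assoc)
  then have "b * E y = b"
    using unital_pa_mem_iff[OF un \<open>y \<in> I\<close>] \<open>a \<in> A y\<close> unfolding b_def by simp
  moreover have "b * E z = b" using unital_paD(2)[OF un \<open>z \<in> I\<close>] unfolding b_def by (simp add: mult.assoc)
  ultimately have b: "b \<in> A y" "b \<in> A z" using unital_pa_mem_iff[OF un] assms by blast+
  define f1 where "f1 = (\<lambda>j. if j = y then b else 0)"
  define f2 where "f2 = (\<lambda>j. if j = z then b else 0)"
  have "(\<forall>j. j \<notin> I \<longrightarrow> f1 j = 0) \<and> (\<forall>j\<in>I. f1 j \<in> A j) \<and> b = (\<Sum>j\<in>I. f1 j)"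
    using assms b zero unfolding f1_def by simp
  moreover have "(\<forall>j. j \<notin> I \<longrightarrow> f2 j = 0) \<and> (\<forall>j\<in>I. f2 j \<in> A j) \<and> b = (\<Sum>j\<in>I. f2 j)"
    using assms b zero unfolding f2_def by simp
  ultimately have "f1 = f2" using ds unfolding internal_direct_sum_def by metis
  then have "f1 y = f2 y" by simp
  then show ?thesis using \<open>y \<noteq> z\<close> unfolding f1_def f2_def b_def by simp
qed

lemma internal_direct_sum_decompose:
  assumes ds: "internal_direct_sum I A" and fin: "finite I" and un: "unital_pa I A E"
  shows "b = (\<Sum>j\<in>I. b * E j)"
proof -
  obtain f where f: "\<forall>j\<in>I. f j \<in> A j" "b = (\<Sum>j\<in>I. f j)"
    using ds unfolding internal_direct_sum_def by metis
  have "b * E y = f y" if "y \<in> I" for y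
  proof -
    have "b * E y = (\<Sum>j\<in>I. f j * E y)" using f(2) by (simp add: sum_distrib_right)
    also have "\<dots> = (\<Sum>j\<in>I. if j = y then f y else 0)"
      using f(1) that internal_direct_sum_orthogonal[OF ds fin un] unital_pa_mem_iff[OF un]
      by (intro sum.cong) auto
    also have "\<dots> = f y" using that fin by simp
    finally show ?thesis .
  qed
  then show ?thesis using f(2) by simp
qed

locale groupoid_structure =
  fixes G G0 :: "'g set" and s t :: "'g \<Rightarrow> 'g" and m :: "'g \<Rightarrow> 'g \<Rightarrow> 'g" and i :: "'g \<Rightarrow> 'g"
  assumes groupoid: "groupoid G G0 s t m i"
begin

lemma object_in_G: "y \<in> G0 \<Longrightarrow> y \<in> G"
  using groupoid unfolding groupoid_def by blast

lemma source_in_objects [simp]: "g \<in> G \<Longrightarrow> s g \<in> G0"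
  and target_in_objects [simp]: "g \<in> G \<Longrightarrow> t g \<in> G0"
  using groupoid unfolding groupoid_def by blast+

lemma comp_closed [simp]: "g \<in> G \<Longrightarrow> h \<in> G \<Longrightarrow> s g = t h \<Longrightarrow> m g h \<in> G"
  and source_comp [simp]: "g \<in> G \<Longrightarrow> h \<in> G \<Longrightarrow> s g = t h \<Longrightarrow> s (m g h) = s h"
  and target_comp [simp]: "g \<in> G \<Longrightarrow> h \<in> G \<Longrightarrow> s g = t h \<Longrightarrow> t (m g h) = t g"
  using groupoid unfolding groupoid_def by blast+

lemma comp_assoc:
  "f \<in> G \<Longrightarrow> g \<in> G \<Longrightarrow> h \<in> G \<Longrightarrow> s f = t g \<Longrightarrow> s g = t h \<Longrightarrow> m (m f g) h = m f (m g h)"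
  using groupoid unfolding groupoid_def by blast

lemma comp_target_left [simp]: "g \<in> G \<Longrightarrow> m (t g) g = g"
  and comp_source_right [simp]: "g \<in> G \<Longrightarrow> m g (s g) = g"
  using groupoid unfolding groupoid_def by blast+

lemma inverse_closed [simp]: "g \<in> G \<Longrightarrow> i g \<in> G"
  and source_inverse [simp]: "g \<in> G \<Longrightarrow> s (i g) = t g"
  and target_inverse [simp]: "g \<in> G \<Longrightarrow> t (i g) = s g"
  and comp_inverse_left [simp]: "g \<in> G \<Longrightarrow> m (i g) g = s g"
  using groupoid unfolding groupoid_def by blast+

lemma inverse_inverse [simp]:
  assumes "g \<in> G"
  shows "i (i g) = g"
proof -
  have "i (i g) = m (i (i g)) (m (i g) g)" using assms comp_source_right[of "i (i g)"] by simp
  also have "\<dots> = m (m (i (i g)) (i g)) g" using assms comp_assoc[of "i (i g)" "i g" g] by simp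
  also have "\<dots> = g" using assms by simp
  finally show ?thesis .
qed

end

locale unital_partial_action = groupoid_structure G G0 s t m i
  for G G0 :: "'g set" and s t :: "'g \<Rightarrow> 'g" and m :: "'g \<Rightarrow> 'g \<Rightarrow> 'g" and i :: "'g \<Rightarrow> 'g" +
  fixes D :: "'g \<Rightarrow> 'a::ring set" and e :: "'g \<Rightarrow> 'a" and \<alpha> :: "'g \<Rightarrow> 'a \<Rightarrow> 'a"
  assumes partial_action: "partial_action G G0 s t m i D \<alpha>"
    and unital: "unital_pa G D e"
begin

lemma mem_D_iff: "g \<in> G \<Longrightarrow> a \<in> D g \<longleftrightarrow> a * e g = a"
  using unital_pa_mem_iff[OF unital] .

lemma e_idem: "g \<in> G \<Longrightarrow> e g * e g = e g"
  and e_central: "g \<in> G \<Longrightarrow> a * e g = e g * a"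
  using unital_paD[OF unital] by blast+

lemma mult_e_in_D: "g \<in> G \<Longrightarrow> a * e g \<in> D g"
  using mem_D_iff e_idem by (simp add: mult.assoc)

lemma e_in_D: "g \<in> G \<Longrightarrow> e g \<in> D g"
  using mem_D_iff e_idem by simp

lemma e_mult_left: "g \<in> G \<Longrightarrow> a \<in> D g \<Longrightarrow> e g * a = a"
  using mem_D_iff e_central by metis

lemma D_subset_target: "g \<in> G \<Longrightarrow> D g \<subseteq> D (t g)"
proof -
  assume "g \<in> G"
  then have "ideal_in (D g) (D (t g))" using partial_action unfolding partial_action_def by blast
  then show ?thesis unfolding ideal_in_def by blast
qed

lemma e_target_mult: "g \<in> G \<Longrightarrow> e (t g) * e g = e g"
  using D_subset_target e_in_D e_mult_left target_in_objects object_in_G by (metis subsetD)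

lemma e_eq_if_D_eq:
  assumes "g \<in> G" "h \<in> G" "D g = D h"
  shows "e g = e h"
proof -
  have "e g = e g * e h" using assms e_in_D mem_D_iff by metis
  also have "\<dots> = e h" using assms e_in_D e_mult_left by metis
  finally show ?thesis .
qed

lemma alpha_ring_iso: "g \<in> G \<Longrightarrow> ring_iso_on (\<alpha> g) (D (i g)) (D g)"
  using partial_action unfolding partial_action_def by blast

lemma alpha_in_D: "g \<in> G \<Longrightarrow> a \<in> D (i g) \<Longrightarrow> \<alpha> g a \<in> D g"
  using alpha_ring_iso unfolding ring_iso_on_def bij_betw_def by blast

lemma alpha_add: "g \<in> G \<Longrightarrow> a \<in> D (i g) \<Longrightarrow> b \<in> D (i g) \<Longrightarrow> \<alpha> g (a + b) = \<alpha> g a + \<alpha> g b"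
  and alpha_mult: "g \<in> G \<Longrightarrow> a \<in> D (i g) \<Longrightarrow> b \<in> D (i g) \<Longrightarrow> \<alpha> g (a * b) = \<alpha> g a * \<alpha> g b"
  using alpha_ring_iso unfolding ring_iso_on_def by blast+

lemma alpha_onto: "g \<in> G \<Longrightarrow> b \<in> D g \<Longrightarrow> \<exists>a\<in>D (i g). \<alpha> g a = b"
  using alpha_ring_iso unfolding ring_iso_on_def bij_betw_def by (metis imageE)

lemma alpha_object: "y \<in> G0 \<Longrightarrow> a \<in> D y \<Longrightarrow> \<alpha> y a = a"
  using partial_action unfolding partial_action_def by blast

lemma alpha_comp:
  assumes "g \<in> G" "h \<in> G" "s g = t h" "a \<in> D (i h)" "\<alpha> h a \<in> D (i g)"
  shows "a \<in> D (i (m g h))" and "\<alpha> g (\<alpha> h a) = \<alpha> (m g h) a"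
  using partial_action assms unfolding partial_action_def by blast+

lemma alpha_e:
  assumes "g \<in> G"
  shows "\<alpha> g (e (i g)) = e g"
proof -
  obtain b where b: "b \<in> D (i g)" "\<alpha> g b = e g" using alpha_onto assms e_in_D by blast
  have e_ig: "e (i g) \<in> D (i g)" using assms e_in_D by simp
  have "\<alpha> g (e (i g)) = \<alpha> g (e (i g)) * \<alpha> g b"
    using b assms mem_D_iff alpha_in_D[OF assms e_ig] by simp
  also have "\<dots> = \<alpha> g (e (i g) * b)" using alpha_mult assms e_ig b by simp
  also have "e (i g) * b = b" using e_mult_left assms b by simp
  finally show ?thesis using b by simp
qed

lemma alpha_mult_invariant:
  assumes "h \<in> G" and invariant: "\<alpha> h (a * e (i h)) = a * e h"
  shows "\<alpha> h (a * b * e (i h)) = a * \<alpha> h (b * e (i h))"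
proof -
  have "a * b * e (i h) = (a * e (i h)) * (b * e (i h))"
    using e_idem e_central assms by (metis inverse_closed mult.assoc)
  then have "\<alpha> h (a * b * e (i h)) = \<alpha> h (a * e (i h)) * \<alpha> h (b * e (i h))"
    using assms alpha_mult mult_e_in_D by simp
  also have "\<dots> = a * (e h * \<alpha> h (b * e (i h)))"
    using invariant by (simp add: mult.assoc)
  also have "\<dots> = a * \<alpha> h (b * e (i h))"
    using assms e_mult_left alpha_in_D mult_e_in_D by simp
  finally show ?thesis .
qed

end

locale group_type_action = unital_partial_action G G0 s t m i D e \<alpha>
  for G G0 :: "'g set" and s t :: "'g \<Rightarrow> 'g" and m :: "'g \<Rightarrow> 'g \<Rightarrow> 'g" and i :: "'g \<Rightarrow> 'g"
    and D :: "'g \<Rightarrow> 'a::ring set" and e :: "'g \<Rightarrow> 'a" and \<alpha> :: "'g \<Rightarrow> 'a \<Rightarrow> 'a" +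
  fixes x :: 'g and \<tau> :: "'g \<Rightarrow> 'g"
  assumes finite_objects: "finite G0"
    and direct_sum: "internal_direct_sum G0 D"
    and base_object: "x \<in> G0"
    and transversal: "transversal G G0 s t x \<tau>"
    and tau_ideals: "\<forall>y\<in>G0. D (i (\<tau> y)) = D x \<and> D (\<tau> y) = D y"
begin

lemma tau_closed [simp]: "y \<in> G0 \<Longrightarrow> \<tau> y \<in> G"
  and source_tau [simp]: "y \<in> G0 \<Longrightarrow> s (\<tau> y) = x"
  and target_tau [simp]: "y \<in> G0 \<Longrightarrow> t (\<tau> y) = y"
  using transversal unfolding transversal_def hom_def by blast+

lemma tau_base: "\<tau> x = x"
  using transversal unfolding transversal_def by blast

lemma D_tau [simp]: "y \<in> G0 \<Longrightarrow> D (\<tau> y) = D y"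
  and D_inverse_tau [simp]: "y \<in> G0 \<Longrightarrow> D (i (\<tau> y)) = D x"
  using tau_ideals by blast+

lemma base_in_G [simp]: "x \<in> G"
  using base_object object_in_G by blast

lemma e_tau [simp]: "y \<in> G0 \<Longrightarrow> e (\<tau> y) = e y"
  and e_inverse_tau [simp]: "y \<in> G0 \<Longrightarrow> e (i (\<tau> y)) = e x"
  using e_eq_if_D_eq object_in_G by simp_all

lemma unital_objects: "unital_pa G0 D e"
  using unital object_in_G unfolding unital_pa_def by blast

lemma D_orthogonal: "y \<in> G0 \<Longrightarrow> z \<in> G0 \<Longrightarrow> y \<noteq> z \<Longrightarrow> a \<in> D y \<Longrightarrow> a * e z = 0"
  by (rule internal_direct_sum_orthogonal[OF direct_sum finite_objects unital_objects])

lemma sum_components: "b = (\<Sum>y\<in>G0. b * e y)"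
  by (rule internal_direct_sum_decompose[OF direct_sum finite_objects unital_objects])

lemma alpha_tau_in_D: "y \<in> G0 \<Longrightarrow> a \<in> D x \<Longrightarrow> \<alpha> (\<tau> y) a \<in> D y"
  using alpha_in_D[of "\<tau> y"] by simp

lemma alpha_inverse_tau_in_D: "y \<in> G0 \<Longrightarrow> b \<in> D y \<Longrightarrow> \<alpha> (i (\<tau> y)) b \<in> D x"
  using alpha_in_D[of "i (\<tau> y)"] by simp

lemma alpha_inverse_tau_tau:
  assumes "y \<in> G0" "a \<in> D x"
  shows "\<alpha> (i (\<tau> y)) (\<alpha> (\<tau> y) a) = a"
proof -
  have "\<alpha> (i (\<tau> y)) (\<alpha> (\<tau> y) a) = \<alpha> (m (i (\<tau> y)) (\<tau> y)) a"
    using alpha_comp(2)[of "i (\<tau> y)" "\<tau> y" a] alpha_tau_in_D assms by simp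
  then show ?thesis using assms alpha_object base_object by simp
qed

lemma alpha_tau_inverse_tau:
  assumes "y \<in> G0" "b \<in> D y"
  shows "\<alpha> (\<tau> y) (\<alpha> (i (\<tau> y)) b) = b"
proof -
  obtain a where a: "a \<in> D x" "\<alpha> (\<tau> y) a = b" using alpha_onto[of "\<tau> y" b] assms by auto
  then have "\<alpha> (i (\<tau> y)) b = a" using alpha_inverse_tau_tau[OF assms(1)] by blast
  then show ?thesis using a(2) by simp
qed

definition Phi :: "'a \<Rightarrow> 'a" where
  "Phi a = (\<Sum>y\<in>G0. \<alpha> (\<tau> y) a)"

lemma Phi_mult_e:
  assumes "z \<in> G0" "a \<in> D x"
  shows "Phi a * e z = \<alpha> (\<tau> z) a"
proof -
  have "Phi a * e z = (\<Sum>y\<in>G0. \<alpha> (\<tau> y) a * e z)"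
    unfolding Phi_def by (simp add: sum_distrib_right)
  also have "\<dots> = (\<Sum>y\<in>G0. if y = z then \<alpha> (\<tau> z) a else 0)"
    using assms alpha_tau_in_D D_orthogonal mem_D_iff object_in_G by (intro sum.cong) auto
  also have "\<dots> = \<alpha> (\<tau> z) a" using assms finite_objects by simp
  finally show ?thesis .
qed

lemma Phi_mult_e_base: "a \<in> D x \<Longrightarrow> Phi a * e x = a"
  using Phi_mult_e base_object tau_base alpha_object by simp

lemma Phi_add: "a \<in> D x \<Longrightarrow> b \<in> D x \<Longrightarrow> Phi (a + b) = Phi a + Phi b"
  unfolding Phi_def using alpha_add[of "\<tau> _"] by (simp add: sum.distrib)

lemma Phi_mult:
  assumes "a \<in> D x" "b \<in> D x"
  shows "Phi (a * b) = Phi a * Phi b"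
proof -
  have "Phi a * Phi b = (\<Sum>y\<in>G0. \<alpha> (\<tau> y) a * Phi b)"
    unfolding Phi_def[of a] by (simp add: sum_distrib_right)
  also have "\<dots> = (\<Sum>y\<in>G0. \<alpha> (\<tau> y) a * (Phi b * e y))"
  proof (rule sum.cong)
    fix y assume "y \<in> G0"
    then have "\<alpha> (\<tau> y) a = \<alpha> (\<tau> y) a * e y" "e y * Phi b = Phi b * e y"
      using assms alpha_tau_in_D mem_D_iff object_in_G e_central by metis+
    then show "\<alpha> (\<tau> y) a * Phi b = \<alpha> (\<tau> y) a * (Phi b * e y)"
      by (metis mult.assoc)
  qed simp
  also have "\<dots> = (\<Sum>y\<in>G0. \<alpha> (\<tau> y) (a * b))"
    using assms Phi_mult_e alpha_mult[of "\<tau> _"] by (intro sum.cong) auto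
  also have "\<dots> = Phi (a * b)"
    by (simp add: Phi_def)
  finally show ?thesis by simp
qed

lemma isotropy_conjugate_in_hom:
  "g \<in> G \<Longrightarrow> m (i (\<tau> (t g))) (m g (\<tau> (s g))) \<in> hom G s t x x"
  unfolding hom_def by simp

lemma alpha_through_isotropy:
  assumes g: "g \<in> G" and b: "b \<in> D (i g)"
  defines "h \<equiv> m (i (\<tau> (t g))) (m g (\<tau> (s g)))"
  shows "\<alpha> (i (\<tau> (s g))) b \<in> D (i h)"
    and "\<alpha> g b = \<alpha> (\<tau> (t g)) (\<alpha> h (\<alpha> (i (\<tau> (s g))) b))"
proof -
  define u where "u = s g"
  define v where "v = t g"
  define k where "k = m g (\<tau> u)"
  define c where "c = \<alpha> (i (\<tau> u)) b"
  have uv: "u \<in> G0" "v \<in> G0" using g by (simp_all add: u_def v_def)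
  have k: "k \<in> G" "s k = x" "t k = v" using g uv by (simp_all add: k_def u_def v_def)
  have h: "h = m (i (\<tau> v)) k" by (simp add: h_def k_def u_def v_def)
  have "b \<in> D u" using b g D_subset_target[of "i g"] by (auto simp: u_def)
  then have c: "c \<in> D (i (\<tau> u))" "\<alpha> (\<tau> u) c = b"
    using uv alpha_inverse_tau_in_D alpha_tau_inverse_tau by (simp_all add: c_def)
  then have c_k: "c \<in> D (i k)" and g_k: "\<alpha> g b = \<alpha> k c"
    using alpha_comp[OF g tau_closed[OF uv(1)] _ c(1)] g b uv by (simp_all add: k_def u_def)
  have kc: "\<alpha> k c \<in> D v" using alpha_in_D[OF k(1) c_k] D_subset_target[OF k(1)] k(3) by auto
  then have "\<alpha> k c \<in> D (i (i (\<tau> v)))" using uv by simp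
  then have "c \<in> D (i h)" and k_h: "\<alpha> (i (\<tau> v)) (\<alpha> k c) = \<alpha> h c"
    using alpha_comp[of "i (\<tau> v)" k c] c_k k uv by (simp_all add: h)
  then show "\<alpha> (i (\<tau> (s g))) b \<in> D (i h)" by (simp add: c_def u_def)
  have "\<alpha> g b = \<alpha> (\<tau> v) (\<alpha> h c)"
    using g_k k_h alpha_tau_inverse_tau[OF uv(2) kc] by simp
  then show "\<alpha> g b = \<alpha> (\<tau> (t g)) (\<alpha> h (\<alpha> (i (\<tau> (s g))) b))" by (simp add: c_def u_def v_def)
qed

lemma isotropy_invariant_transport_factor:
  assumes g: "g \<in> G"
  obtains w where "\<And>a. a \<in> isotropy_invariants G s t i D e \<alpha> x \<Longrightarrow>
    \<alpha> g (\<alpha> (\<tau> (s g)) a * e (i g)) = \<alpha> (\<tau> (t g)) a * w"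
proof -
  define u where "u = s g"
  define v where "v = t g"
  define h where "h = m (i (\<tau> v)) (m g (\<tau> u))"
  define f where "f = \<alpha> (i (\<tau> u)) (e (i g))"
  have uv: "u \<in> G0" "v \<in> G0" using g by (simp_all add: u_def v_def)
  have h: "h \<in> G" "s h = x" "t h = x"
    using isotropy_conjugate_in_hom[OF g] unfolding hom_def h_def u_def v_def by blast+
  have e_ig: "e (i g) \<in> D u" using g D_subset_target[of "i g"] e_in_D[of "i g"] by (auto simp: u_def)
  have hf: "\<alpha> h (f * e (i h)) \<in> D x"
    using alpha_in_D[OF h(1) mult_e_in_D] D_subset_target[OF h(1)] h by auto
  have "\<alpha> g (\<alpha> (\<tau> u) a * e (i g)) = \<alpha> (\<tau> v) a * \<alpha> (\<tau> v) (\<alpha> h (f * e (i h)))"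
    if a: "a \<in> isotropy_invariants G s t i D e \<alpha> x" for a
  proof -
    have ax: "a \<in> D x" and invariant: "\<alpha> h (a * e (i h)) = a * e h"
      using a h unfolding isotropy_invariants_def hom_def by auto
    define b where "b = \<alpha> (\<tau> u) a * e (i g)"
    have "\<alpha> (i (\<tau> u)) b = a * f"
      using alpha_mult[of "i (\<tau> u)"] alpha_tau_in_D alpha_inverse_tau_tau ax e_ig uv
      by (simp add: b_def f_def)
    moreover have b: "b \<in> D (i g)" using g mult_e_in_D by (simp add: b_def)
    ultimately have "a * f \<in> D (i h)" and g_b: "\<alpha> g b = \<alpha> (\<tau> v) (\<alpha> h (a * f))"
      using alpha_through_isotropy[OF g b] by (simp_all add: h_def u_def v_def)
    then have "\<alpha> h (a * f) = a * \<alpha> h (f * e (i h))"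
      using alpha_mult_invariant[OF h(1) invariant] mem_D_iff[of "i h"] h(1) by (metis inverse_closed)
    then have "\<alpha> g b = \<alpha> (\<tau> v) (a * \<alpha> h (f * e (i h)))"
      using g_b by simp
    then show ?thesis
      using alpha_mult[of "\<tau> v" a] ax uv hf by (simp add: b_def)
  qed
  then show ?thesis using that by (simp add: u_def v_def)
qed

lemma e_base_isotropy_invariant: "e x \<in> isotropy_invariants G s t i D e \<alpha> x"
proof -
  have "\<alpha> h (e x * e (i h)) = e x * e h" if "h \<in> hom G s t x x" for h
  proof -
    have h: "h \<in> G" "s h = x" "t h = x" using that unfolding hom_def by auto
    then have "e x * e (i h) = e (i h)" and "e x * e h = e h"
      using e_target_mult[of "i h"] e_target_mult[of h] by simp_all
    then show ?thesis using alpha_e h(1) by simp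
  qed
  then show ?thesis using e_in_D unfolding isotropy_invariants_def by simp
qed

lemma alpha_transport_isotropy_invariant:
  assumes g: "g \<in> G" and a: "a \<in> isotropy_invariants G s t i D e \<alpha> x"
  shows "\<alpha> g (\<alpha> (\<tau> (s g)) a * e (i g)) = \<alpha> (\<tau> (t g)) a * e g"
proof -
  obtain w where w: "\<And>a. a \<in> isotropy_invariants G s t i D e \<alpha> x \<Longrightarrow>
      \<alpha> g (\<alpha> (\<tau> (s g)) a * e (i g)) = \<alpha> (\<tau> (t g)) a * w"
    using isotropy_invariant_transport_factor[OF g] by blast
  have "\<alpha> (\<tau> y) (e x) = e y" if "y \<in> G0" for y using alpha_e[of "\<tau> y"] that by simp
  then have "e g = e (t g) * w"
    using w[OF e_base_isotropy_invariant] g e_target_mult[of "i g"] alpha_e by simp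
  moreover have "\<alpha> (\<tau> (t g)) a * e (t g) = \<alpha> (\<tau> (t g)) a"
    using a g alpha_tau_in_D mem_D_iff object_in_G unfolding isotropy_invariants_def by simp
  ultimately show ?thesis using w[OF a] by (metis mult.assoc)
qed

lemma Phi_invariant:
  assumes "a \<in> isotropy_invariants G s t i D e \<alpha> x"
  shows "Phi a \<in> invariants G i e \<alpha>"
proof -
  have ax: "a \<in> D x" using assms unfolding isotropy_invariants_def by blast
  have "\<alpha> g (Phi a * e (i g)) = Phi a * e g" if g: "g \<in> G" for g
  proof -
    have "Phi a * e (i g) = Phi a * e (s g) * e (i g)"
      using e_target_mult[of "i g"] g by (simp add: mult.assoc)
    moreover have "Phi a * e g = Phi a * e (t g) * e g"
      using e_target_mult[of g] g by (simp add: mult.assoc)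
    ultimately show ?thesis
      using alpha_transport_isotropy_invariant[OF g assms] Phi_mult_e ax g by simp
  qed
  then show ?thesis unfolding invariants_def by blast
qed

lemma invariant_restrict_base:
  assumes b: "b \<in> invariants G i e \<alpha>"
  shows "b * e x \<in> isotropy_invariants G s t i D e \<alpha> x" and "Phi (b * e x) = b"
proof -
  have inv: "\<alpha> g (b * e (i g)) = b * e g" if "g \<in> G" for g
    using b that unfolding invariants_def by blast
  have "\<alpha> g (b * e x * e (i g)) = b * e x * e g" if "g \<in> hom G s t x x" for g
  proof -
    have g: "g \<in> G" "s g = x" "t g = x" using that unfolding hom_def by auto
    then have "e x * e (i g) = e (i g)" and "e x * e g = e g"
      using e_target_mult[of "i g"] e_target_mult[of g] by simp_all
    then show ?thesis using inv g(1) by (simp add: mult.assoc)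
  qed
  then show "b * e x \<in> isotropy_invariants G s t i D e \<alpha> x"
    unfolding isotropy_invariants_def using mult_e_in_D by simp
  have "\<alpha> (\<tau> y) (b * e x) = b * e y" if "y \<in> G0" for y
    using inv[of "\<tau> y"] that by simp
  then have "Phi (b * e x) = (\<Sum>y\<in>G0. b * e y)" unfolding Phi_def by simp
  then show "Phi (b * e x) = b" using sum_components by simp
qed

lemma Phi_ring_iso:
  "ring_iso_on Phi (isotropy_invariants G s t i D e \<alpha> x) (invariants G i e \<alpha>)"
proof -
  have in_D: "a \<in> D x" if "a \<in> isotropy_invariants G s t i D e \<alpha> x" for a
    using that unfolding isotropy_invariants_def by blast
  have "inj_on Phi (isotropy_invariants G s t i D e \<alpha> x)"
    using Phi_mult_e_base in_D by (metis inj_onI)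
  moreover have "Phi ` isotropy_invariants G s t i D e \<alpha> x = invariants G i e \<alpha>"
  proof
    show "Phi ` isotropy_invariants G s t i D e \<alpha> x \<subseteq> invariants G i e \<alpha>"
      using Phi_invariant by blast
    show "invariants G i e \<alpha> \<subseteq> Phi ` isotropy_invariants G s t i D e \<alpha> x"
      using invariant_restrict_base by (metis image_eqI subsetI)
  qed
  ultimately show ?thesis
    unfolding ring_iso_on_def bij_betw_def using Phi_add Phi_mult in_D by blast
qed

end

theorem corollary3p2:
  fixes G G0 :: "'g set" and s t :: "'g \<Rightarrow> 'g" and m :: "'g \<Rightarrow> 'g \<Rightarrow> 'g" and i :: "'g \<Rightarrow> 'g"
    and D :: "'g \<Rightarrow> 'a::ring set" and e :: "'g \<Rightarrow> 'a" and \<alpha> :: "'g \<Rightarrow> 'a \<Rightarrow> 'a"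
    and x :: 'g and \<tau> :: "'g \<Rightarrow> 'g"
  assumes "groupoid G G0 s t m i"
    and "finite G"
    and "connected_groupoid G G0 s t"
    and "partial_action G G0 s t m i D \<alpha>"
    and "unital_pa G D e"
    and "group_type G G0 s t i D"
    and "internal_direct_sum G0 D"
    and "x \<in> G0"
    and "transversal G G0 s t x \<tau>"
    and "\<forall>y\<in>G0. D (i (\<tau> y)) = D x \<and> D (\<tau> y) = D y"
  shows "ring_iso_on (\<lambda>a. \<Sum>y\<in>G0. \<alpha> (\<tau> y) a)
           (isotropy_invariants G s t i D e \<alpha> x) (invariants G i e \<alpha>)"
proof -
  (* Connectedness and group type are implied by the transversal hypotheses. *)
  have "finite G0" using assms(1,2) unfolding groupoid_def by (meson finite_subset)
  interpret group_type_action G G0 s t m i D e \<alpha> x \<tau>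
    using assms \<open>finite G0\<close> by unfold_locales auto
  show ?thesis using Phi_ring_iso unfolding Phi_def .
qed

end
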